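(* Given a network, assume hosts generate IPv6 addresses using Cryptographically Generated Addresses (CGA) with security parameter $0 \leq \mathit{sec} \leq 7$. Then the expected number of hash function evaluations required for an attacker to spoof a specific (target) address is \[ T_{CGA} = \begin{cases} 2^{59} & \text{if } \mathit{sec} = 0,\\ 2^{59} + \dfrac{2^{16\cdot \mathit{sec}+59}}{3} & \text{if } \mathit{sec} > 0. \end{cases} \]
   Context: An IPv6 address is 128 bits: the leftmost 64 bits are the subnet prefix and the rightmost 64 bits are the interface identifier. In CGA, a host forms a CGA Parameters data structure consisting of a 128-bit modifier, the 64-bit subnet prefix, an 8-bit collision count taking only the values 0, 1 or 2, the host's (DER-encoded) public key, and an extension field (empty by default). The address carries a 3-bit security parameter $\mathit{sec}\in\{0,\dots,7\}$ in the three leftmost bits of its interface identifier. Hash2 is the leftmost 112 bits of the hash of the CGA Parameters data structure with subnet prefix and collision count set to zero; Hash1 is the leftmost 64 bits of the hash of the full CGA Parameters data structure. Generation: the host iterates the modifier until the leftmost $16\cdot\mathit{sec}$ bits of Hash2 are zero (skipped if $\mathit{sec}=0$), then computes Hash1, and the interface identifier is Hash1 with the three leftmost bits replaced by $\mathit{sec}$ and the $u$ and $g$ bits (the 6th and 7th leftmost bits, counting from 0) set to zero; the address is subnet prefix concatenated with interface identifier. If a duplicate address is detected, the collision count is incremented and Hash1 recomputed (at most values 0,1,2). Verification of an address against a CGA Parameters data structure checks: collision count $\le 2$; subnet prefix matches the address; recomputed Hash1 matches the interface identifier (ignoring the $\mathit{sec}$, $u$, $g$ bits, so 59 bits must match);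 the leftmost $16\cdot\mathit{sec}$ bits of recomputed Hash2 are zero. Spoofing a specific address means finding a CGA Parameters data structure containing the attacker's own public key that passes verification for the target address. Hash outputs are modeled as uniformly random, and cost is measured in the number of hash function evaluations (each computation of Hash1 or Hash2 counts as one evaluation). *)

theory Defs
  imports "HOL-Probability.Probability"
begin

text \<open>Cost model (number of hash evaluations) of the brute-force spoofing attack on a
CGA address with security parameter sec, in the random-oracle model.

One attack round: the attacker draws fresh modifiers and evaluates Hash2 on each until
the leftmost 16*sec bits of Hash2 are zero (each evaluation succeeds independently with
probability 2^-(16*sec); this step is skipped, costing 0, if sec = 0).  With the
resulting modifier it evaluates Hash1 for the three admissible collision counts 0,1,2
(3 evaluations).  The round succeeds when one of these three Hash1 values matches the 59
relevant bits of the target interface identifier, which (as in the paper) happens with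
probability 3 * 2^-59.  Rounds are independent; the attack stops after the first
successful round.\<close>

definition hash2_success_prob :: "nat \<Rightarrow> real" where
  "hash2_success_prob sec = 1 / 2 ^ (16 * sec)"

definition hash1_round_success_prob :: real where
  "hash1_round_success_prob = 3 / 2 ^ 59"

definition hash2_search_cost :: "nat \<Rightarrow> nat pmf" where
  "hash2_search_cost sec =
     (if sec = 0 then return_pmf 0
      else map_pmf Suc (geometric_pmf (hash2_success_prob sec)))"

definition round_cost :: "nat \<Rightarrow> nat pmf" where
  "round_cost sec = map_pmf (\<lambda>h. h + 3) (hash2_search_cost sec)"

fun rounds_cost :: "nat \<Rightarrow> nat pmf \<Rightarrow> nat pmf" where
  "rounds_cost 0 C = return_pmf 0"
| "rounds_cost (Suc n) C = bind_pmf C (\<lambda>c. map_pmf (\<lambda>r. c + r) (rounds_cost n C))"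

text \<open>Total number of hash evaluations of the spoofing attack: the number of failed
rounds is geometric with the round success probability; then one successful round.\<close>
definition cga_spoof_cost :: "nat \<Rightarrow> nat pmf" where
  "cga_spoof_cost sec =
     bind_pmf (geometric_pmf hash1_round_success_prob)
       (\<lambda>failures. rounds_cost (Suc failures) (round_cost sec))"

end

theory Submission
  imports Defs
begin

text \<open>The attack consists of a geometric number of independent rounds with success probability
  \<open>q = 3 / 2^59\<close>, i.e. \<open>1/q\<close> rounds on average.  The number of rounds is independent of their
  costs, so by Wald's identity the expected total cost is \<open>1/q\<close> times the expected cost of one
  round.  A round costs 3 Hash1 evaluations plus, for \<open>sec > 0\<close>, a geometric Hash2 search with
  mean \<open>2^(16 sec)\<close>; hence the expected cost is \<open>(2^(16 sec) + 3) 2^59 / 3\<close>.\<close>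

lemma nn_integral_pmf_add_const:
  "(\<integral>\<^sup>+x. f x + c \<partial>measure_pmf M) = (\<integral>\<^sup>+x. f x \<partial>measure_pmf M) + c"
  by (subst nn_integral_add) (auto simp: measure_pmf.emeasure_space_1)

lemma nn_integral_geometric_pmf:
  assumes "p \<in> {0<..1}"
  shows "(\<integral>\<^sup>+n. of_nat n \<partial>geometric_pmf p) = ennreal ((1 - p) / p)"
  unfolding ennreal_of_nat_eq_real_of_nat
  using expectation_geometric_pmf[OF assms] integrable_real_geometric_pmf[OF assms]
  by (subst nn_integral_eq_integral) auto

lemma nn_integral_Suc_geometric_pmf:
  assumes p: "p \<in> {0<..1}"
  shows "(\<integral>\<^sup>+n. of_nat (Suc n) \<partial>geometric_pmf p) = ennreal (1 / p)"
proof -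
  have "(\<integral>\<^sup>+n. of_nat (Suc n) \<partial>geometric_pmf p) = ennreal ((1 - p) / p) + 1"
    using nn_integral_pmf_add_const[where f = of_nat and c = 1] nn_integral_geometric_pmf[OF p]
    by (simp add: add.commute)
  also have "\<dots> = ennreal ((1 - p) / p + 1)"
    using p by (subst ennreal_plus) auto
  also have "(1 - p) / p + 1 = 1 / p"
    using p by (simp add: field_simps)
  finally show ?thesis .
qed

lemma nn_integral_rounds_cost:
  "(\<integral>\<^sup>+x. of_nat x \<partial>rounds_cost n C) = of_nat n * (\<integral>\<^sup>+x. of_nat x \<partial>C)"
proof (induction n)
  case 0
  show ?case by simp
next
  case (Suc n)
  have "(\<integral>\<^sup>+x. of_nat x \<partial>rounds_cost (Suc n) C)
      = (\<integral>\<^sup>+c. (\<integral>\<^sup>+r. of_nat r + of_nat c \<partial>rounds_cost n C) \<partial>C)"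
    by (simp add: add.commute)
  also have "\<dots> = (\<integral>\<^sup>+c. of_nat n * (\<integral>\<^sup>+x. of_nat x \<partial>C) + of_nat c \<partial>C)"
    by (simp only: nn_integral_pmf_add_const Suc.IH)
  also have "\<dots> = (\<integral>\<^sup>+x. of_nat x \<partial>C) + of_nat n * (\<integral>\<^sup>+x. of_nat x \<partial>C)"
    by (simp add: add.commute[of "of_nat n * _"] nn_integral_pmf_add_const)
  also have "\<dots> = of_nat (Suc n) * (\<integral>\<^sup>+x. of_nat x \<partial>C)"
    by (simp add: algebra_simps)
  finally show ?case .
qed

lemma nn_integral_bind_rounds_cost:
  "(\<integral>\<^sup>+x. of_nat x \<partial>bind_pmf N (\<lambda>k. rounds_cost (g k) C))
     = (\<integral>\<^sup>+k. of_nat (g k) \<partial>N) * (\<integral>\<^sup>+x. of_nat x \<partial>C)"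
  by (simp add: nn_integral_rounds_cost nn_integral_multc)

lemma nn_integral_round_cost:
  "(\<integral>\<^sup>+x. of_nat x \<partial>round_cost sec)
     = ennreal ((if sec = 0 then 0 else 2 ^ (16 * sec)) + 3)"
proof (cases "sec = 0")
  case True
  then show ?thesis
    by (simp add: round_cost_def hash2_search_cost_def)
next
  case False
  let ?p = "hash2_success_prob sec"
  have p: "?p \<in> {0<..1}"
    by (simp add: hash2_success_prob_def)
  have "(\<integral>\<^sup>+x. of_nat x \<partial>round_cost sec) = (\<integral>\<^sup>+n. of_nat (Suc n) + 3 \<partial>geometric_pmf ?p)"
    using False by (simp add: round_cost_def hash2_search_cost_def add.commute add.left_commute)
  also have "\<dots> = ennreal (1 / ?p) + ennreal 3"
    by (simp add: nn_integral_pmf_add_const nn_integral_Suc_geometric_pmf[OF p] del: of_nat_Suc)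
  also have "\<dots> = ennreal (2 ^ (16 * sec) + 3)"
    by (subst ennreal_plus) (auto simp: hash2_success_prob_def)
  finally show ?thesis
    using False by simp
qed

theorem lemma1:
  fixes sec :: nat
  assumes "sec \<le> 7"
  shows "measure_pmf.expectation (cga_spoof_cost sec) real =
           (if sec = 0 then 2 ^ 59 else 2 ^ 59 + 2 ^ (16 * sec + 59) / 3)"
proof -
  define R :: real where "R = (if sec = 0 then 0 else 2 ^ (16 * sec)) + 3"
  let ?q = "hash1_round_success_prob"
  have q: "?q \<in> {0<..1}"
    by (simp add: hash1_round_success_prob_def)
  have R: "R \<ge> 0"
    by (simp add: R_def)
  have "(\<integral>\<^sup>+x. ennreal (real x) \<partial>cga_spoof_cost sec) = ennreal (1 / ?q) * ennreal R"
    unfolding cga_spoof_cost_def ennreal_of_nat_eq_real_of_nat[symmetric] R_def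
    by (simp only: nn_integral_bind_rounds_cost nn_integral_Suc_geometric_pmf[OF q]
        nn_integral_round_cost)
  also have "\<dots> = ennreal (R / ?q)"
    using q R by (simp add: ennreal_mult[symmetric])
  finally have "measure_pmf.expectation (cga_spoof_cost sec) real = R / ?q"
    using q R by (subst (asm) nn_integral_eq_integrable) auto
  then show ?thesis
    by (auto simp: R_def hash1_round_success_prob_def field_simps power_add)
qed

end
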